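(* The fiducial interval is the smallest interval in $\mathcal{M}_\alpha$.
   Context: $\Theta$ is a connected open subset of $\mathbb{R}$, $\mathcal{X}\subseteq\mathbb{Z}$ consists of consecutive integers, $\mathrm{P}_\theta$ denotes probability under $P_\theta$, satisfying (A1) $\mathrm{P}_\theta(X=x)>0$ for all $(\theta,x)$; (A2) $\mathrm{P}_\theta(X\leq x)$ strictly decreasing in $\theta$ for each fixed $x\in\mathcal{X}\backslash\sup\mathcal{X}$; (A3) $\mathrm{P}_\theta(X=x)$ differentiable in $\theta$. $\mathcal{M}_\alpha$ is the class of confidence intervals $(L_{\alpha/2}(x),U_{\alpha/2}(x))$ for $\theta$ based on an observation $x$ of $X\sim P_\theta$ satisfying (D1) $L_{\alpha/2}(x)\leq L_{\alpha/2}(x+1)$ and $U_{\alpha/2}(x)\leq U_{\alpha/2}(x+1)$; (D2) $\inf_{\theta}\mathrm{P}_\theta(L_{\alpha/2}(X)\leq\theta)\geq 1-\alpha/2$ and $\inf_\theta\mathrm{P}_\theta(U_{\alpha/2}(X)\geq\theta)\geq 1-\alpha/2$; (D3) the interval only depends on $x$, $\alpha$ and $P_\theta$. The fiducial interval is $(\theta_L,\theta_U)$ with $\sum_{k\leq x}\mathrm{P}_{\theta_L}(X=k)=\alpha/2$ and $\sum_{k\geq x}\mathrm{P}_{\theta_U}(X=k)=\alpha/2$. An interval $I_\alpha(x)$ in a class $\mathcal{K}$ is the smallest in $\mathcal{K}$ if for any other $I^*_\alpha(x)\in\mathcal{K}$, $I_\alpha(x)\backslash I^*_\alpha(x)=\emptyset$.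 *)

theory Defs
  imports "HOL-Probability.Probability"
begin

text \<open>A confidence interval is a pair of endpoint functions \<open>L U :: int \<Rightarrow> ereal\<close>
  giving the open interval \<open>(L x, U x)\<close> for the observation \<open>x\<close>.\<close>

definition open_interval :: "ereal \<Rightarrow> ereal \<Rightarrow> real set" where
  "open_interval a b = {t. a < ereal t \<and> ereal t < b}"

text \<open>The class M_alpha: conditions (D1) and (D2).  (D3) is met automatically since
  the endpoints are functions of x alone, for the fixed model P and level alpha.\<close>
definition in_M :: "(real \<Rightarrow> int pmf) \<Rightarrow> real set \<Rightarrow> int set \<Rightarrow> real
                    \<Rightarrow> (int \<Rightarrow> ereal) \<Rightarrow> (int \<Rightarrow> ereal) \<Rightarrow> bool" where
  "in_M P \<Theta> \<X> \<alpha> L U \<longleftrightarrow>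
     (\<forall>x. x \<in> \<X> \<longrightarrow> x + 1 \<in> \<X> \<longrightarrow> L x \<le> L (x + 1) \<and> U x \<le> U (x + 1)) \<and>
     (\<forall>\<theta>\<in>\<Theta>. measure_pmf.prob (P \<theta>) {x. L x \<le> ereal \<theta>} \<ge> 1 - \<alpha> / 2) \<and>
     (\<forall>\<theta>\<in>\<Theta>. measure_pmf.prob (P \<theta>) {x. U x \<ge> ereal \<theta>} \<ge> 1 - \<alpha> / 2)"

text \<open>Fiducial endpoints: the solution in \<open>\<Theta>\<close> of the defining equation; when the
  equation has no solution (e.g. x = min X for the lower, x = max X for the upper
  endpoint) the natural boundary convention given by the infimum/supremum.\<close>
definition fiducial_lower :: "(real \<Rightarrow> int pmf) \<Rightarrow> real set \<Rightarrow> real \<Rightarrow> int \<Rightarrow> ereal" where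
  "fiducial_lower P \<Theta> \<alpha> x =
     (if \<exists>\<theta>\<in>\<Theta>. measure_pmf.prob (P \<theta>) {x..} = \<alpha> / 2
      then ereal (THE \<theta>. \<theta> \<in> \<Theta> \<and> measure_pmf.prob (P \<theta>) {x..} = \<alpha> / 2)
      else Inf (ereal ` {\<theta>\<in>\<Theta>. measure_pmf.prob (P \<theta>) {x..} > \<alpha> / 2}))"

definition fiducial_upper :: "(real \<Rightarrow> int pmf) \<Rightarrow> real set \<Rightarrow> real \<Rightarrow> int \<Rightarrow> ereal" where
  "fiducial_upper P \<Theta> \<alpha> x =
     (if \<exists>\<theta>\<in>\<Theta>. measure_pmf.prob (P \<theta>) {..x} = \<alpha> / 2
      then ereal (THE \<theta>. \<theta> \<in> \<Theta> \<and> measure_pmf.prob (P \<theta>) {..x} = \<alpha> / 2)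
      else Sup (ereal ` {\<theta>\<in>\<Theta>. measure_pmf.prob (P \<theta>) {..x} > \<alpha> / 2}))"

end

theory Submission
  imports Defs
begin

text \<open>The upper tail \<open>P\<^sub>\<theta>(X \<ge> k)\<close> increases with \<open>\<theta>\<close>, and the fiducial lower endpoint at \<open>k\<close>
  is the infimum of the parameters at which this tail exceeds \<open>\<alpha>/2\<close>. It is itself a valid
  lower bound: \<open>{k. \<theta> < \<theta>\<^sub>L(k)}\<close> is an up-set \<open>{k\<^sub>0..}\<close> of tail probability at most \<open>\<alpha>/2\<close>.
  It is the largest one: if a monotone lower bound \<open>L\<close> had \<open>L(x\<^sub>0) > \<theta>\<^sub>L(x\<^sub>0)\<close>, then for
  some \<open>\<theta>\<close> in between \<open>P\<^sub>\<theta>(X \<ge> x\<^sub>0) > \<alpha>/2\<close> while \<open>L > \<theta>\<close> on all of \<open>{x\<^sub>0..}\<close>, so \<open>L\<close>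
  would cover \<open>\<theta>\<close> with probability below \<open>1 - \<alpha>/2\<close>. The upper endpoint is the lower endpoint
  of the model reflected by \<open>x \<mapsto> -x\<close>, \<open>\<theta> \<mapsto> -\<theta>\<close>.\<close>

lemma uminus_image_iff: "x \<in> uminus ` A \<longleftrightarrow> - x \<in> A" for x :: "'a::group_add"
  by (metis image_iff minus_minus)

lemma measure_pmf_prob_Compl: "measure_pmf.prob p (- A) = 1 - measure_pmf.prob p A"
  using measure_pmf.prob_compl[of A p] by (simp add: Compl_eq_Diff_UNIV)

lemma measure_pmf_prob_eq_1_if_set_pmf_subset:
  "set_pmf p \<subseteq> A \<Longrightarrow> measure_pmf.prob p A = 1"
  by (subst measure_pmf.prob_eq_1) (auto simp: AE_measure_pmf_iff)

lemma measure_pmf_atLeast_gt: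
  fixes p :: "int pmf"
  assumes "c < 1"
  obtains k where "c < measure_pmf.prob p {k..}"
proof -
  have "(\<lambda>n. measure_pmf.prob p {- int n..}) \<longlonglongrightarrow> measure_pmf.prob p (\<Union>n. {- int n..})"
    by (rule measure_pmf.finite_Lim_measure_incseq) (auto simp: incseq_def)
  moreover have "(\<Union>n. {- int n..}) = UNIV"
  proof -
    have "m \<in> {- int (nat (- m))..}" for m by simp
    then show ?thesis by blast
  qed
  ultimately have "(\<lambda>n. measure_pmf.prob p {- int n..}) \<longlonglongrightarrow> 1" by simp
  from order_tendstoD(1)[OF this assms] show thesis
    using that by (auto dest: eventually_happens)
qed

lemma int_up_closed_eq_atLeast:
  fixes B :: "int set"
  assumes up: "\<And>k m. k \<in> B \<Longrightarrow> k \<le> m \<Longrightarrow> m \<in> B" and "k \<in> B" "m \<notin> B"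
  obtains k\<^sub>0 where "B = {k\<^sub>0..}"
proof -
  have above: "b \<in> B \<Longrightarrow> m < b" for b
    using up \<open>m \<notin> B\<close> by (metis not_less)
  define n where "n = (LEAST n::nat. m + int n \<in> B)"
  have "m + int (nat (k - m)) \<in> B"
    using above[OF \<open>k \<in> B\<close>] \<open>k \<in> B\<close> by simp
  then have "m + int n \<in> B"
    unfolding n_def by (rule LeastI)
  moreover have "m + int n \<le> b" if "b \<in> B" for b
  proof -
    have "m + int (nat (b - m)) \<in> B" using above[OF that] that by simp
    then have "n \<le> nat (b - m)" unfolding n_def by (rule Least_le)
    then show ?thesis using above[OF that] by simp
  qed
  ultimately have "B = {m + int n..}" using up by auto
  then show thesis by (rule that)
qed

lemma mono_on_consecutive_int:
  fixes L :: "int \<Rightarrow> 'a::order"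
  assumes consec: "\<And>a b. a \<in> X \<Longrightarrow> b \<in> X \<Longrightarrow> {a..b} \<subseteq> X"
    and step: "\<And>x. x \<in> X \<Longrightarrow> x + 1 \<in> X \<Longrightarrow> L x \<le> L (x + 1)"
  shows "mono_on X L"
proof (rule mono_onI)
  fix x\<^sub>0 x assume "x\<^sub>0 \<in> X" "x \<in> X" "x\<^sub>0 \<le> x"
  have "x \<in> X \<longrightarrow> L x\<^sub>0 \<le> L x" using \<open>x\<^sub>0 \<le> x\<close>
  proof (induction x rule: int_ge_induct)
    case (step i)
    show ?case
    proof
      assume "i + 1 \<in> X"
      then have "i \<in> X" using consec[OF \<open>x\<^sub>0 \<in> X\<close>] step.hyps by fastforce
      then show "L x\<^sub>0 \<le> L (i + 1)"
        using step.IH \<open>i + 1 \<in> X\<close> assms(2)[of i] by (blast intro: order_trans)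
    qed
  qed simp
  then show "L x\<^sub>0 \<le> L x" using \<open>x \<in> X\<close> by blast
qed

lemma open_real_obtain_between:
  fixes T :: "real set"
  assumes "open T" "s \<in> T" "s < r"
  obtains t where "t \<in> T" "s < t" "t < r"
proof -
  obtain e where "e > 0" "ball s e \<subseteq> T"
    using assms open_contains_ball by blast
  define t where "t = min ((s + r) / 2) (s + e / 2)"
  show thesis
  proof (rule that)
    show "t \<in> T"
      using \<open>e > 0\<close> assms(3) \<open>ball s e \<subseteq> T\<close> by (auto simp: t_def dist_real_def)
  qed (use \<open>e > 0\<close> assms(3) in \<open>auto simp: t_def min_less_iff_disj\<close>)
qed

lemma Inf_ereal_greaterThan_open:
  fixes T :: "real set"
  assumes "open T" "t \<in> T"
  shows "Inf (ereal ` {s\<in>T. t < s}) = ereal t"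
proof (rule antisym)
  show "Inf (ereal ` {s\<in>T. t < s}) \<le> ereal t"
  proof (rule dense_ge)
    fix y assume "ereal t < y"
    then obtain r where "t < r" "ereal r < y"
      using ereal_dense2 by force
    then obtain s where "s \<in> T" "t < s" "s < r"
      using open_real_obtain_between assms by metis
    then have "Inf (ereal ` {s\<in>T. t < s}) \<le> ereal s" by (auto intro: Inf_lower)
    then show "Inf (ereal ` {s\<in>T. t < s}) \<le> y"
      using \<open>s < r\<close> \<open>ereal r < y\<close> by (meson ereal_less_eq(3) less_imp_le order_trans)
  qed
qed (auto intro!: Inf_greatest)

definition lower_confidence_bound ::
    "(real \<Rightarrow> int pmf) \<Rightarrow> real set \<Rightarrow> int set \<Rightarrow> real \<Rightarrow> (int \<Rightarrow> ereal) \<Rightarrow> bool" where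
  "lower_confidence_bound P \<Theta> \<X> \<alpha> L \<longleftrightarrow>
     (\<forall>x. x \<in> \<X> \<longrightarrow> x + 1 \<in> \<X> \<longrightarrow> L x \<le> L (x + 1)) \<and>
     (\<forall>\<theta>\<in>\<Theta>. measure_pmf.prob (P \<theta>) {x. L x \<le> ereal \<theta>} \<ge> 1 - \<alpha> / 2)"

locale increasing_tail_model =
  fixes Q :: "real \<Rightarrow> int pmf" and T :: "real set" and X :: "int set" and \<alpha> :: real
  assumes open_T: "open T"
    and support: "\<And>\<theta>. \<theta> \<in> T \<Longrightarrow> set_pmf (Q \<theta>) = X"
    and consecutive: "\<And>a b. a \<in> X \<Longrightarrow> b \<in> X \<Longrightarrow> {a..b} \<subseteq> X"
    and tail_strict_mono: "\<And>\<theta>\<^sub>1 \<theta>\<^sub>2 k. \<theta>\<^sub>1 \<in> T \<Longrightarrow> \<theta>\<^sub>2 \<in> T \<Longrightarrow> \<theta>\<^sub>1 < \<theta>\<^sub>2 \<Longrightarrow> k - 1 \<in> X \<Longrightarrow> k \<in> X \<Longrightarrow>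
        measure_pmf.prob (Q \<theta>\<^sub>1) {k..} < measure_pmf.prob (Q \<theta>\<^sub>2) {k..}"
    and alpha_pos: "0 < \<alpha>" and alpha_less_1: "\<alpha> < 1"
begin

abbreviation tail :: "real \<Rightarrow> int \<Rightarrow> real" where
  "tail \<theta> k \<equiv> measure_pmf.prob (Q \<theta>) {k..}"

definition exceed_set :: "int \<Rightarrow> real set" where
  "exceed_set k = {\<theta>\<in>T. \<alpha> / 2 < tail \<theta> k}"

lemma tail_constant_off_support:
  assumes "\<not> (k - 1 \<in> X \<and> k \<in> X)"
  obtains "\<And>\<theta>. \<theta> \<in> T \<Longrightarrow> tail \<theta> k = 0" | "\<And>\<theta>. \<theta> \<in> T \<Longrightarrow> tail \<theta> k = 1"
proof -
  have "X \<subseteq> {k..} \<or> X \<inter> {k..} = {}"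
  proof (rule ccontr)
    assume "\<not> ?thesis"
    then obtain a b where "a \<in> X" "a < k" "b \<in> X" "k \<le> b" by (auto simp: not_le)
    then have "k - 1 \<in> X" "k \<in> X" using consecutive[of a b] by auto
    then show False using assms by blast
  qed
  then show thesis
    using that support measure_pmf_prob_eq_1_if_set_pmf_subset
    by (metis measure_pmf_zero_iff order_refl)
qed

lemma tail_mono:
  assumes "\<theta>\<^sub>1 \<in> T" "\<theta>\<^sub>2 \<in> T" "\<theta>\<^sub>1 \<le> \<theta>\<^sub>2"
  shows "tail \<theta>\<^sub>1 k \<le> tail \<theta>\<^sub>2 k"
proof (cases "k - 1 \<in> X \<and> k \<in> X")
  case True
  then show ?thesis using tail_strict_mono[OF assms(1,2)] assms(3)
    by (cases "\<theta>\<^sub>1 = \<theta>\<^sub>2") (auto intro: less_imp_le)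
next
  case False
  then show ?thesis by (rule tail_constant_off_support) (use assms in simp_all)
qed

lemma tail_eq_level_imp_consecutive:
  assumes "\<theta>\<^sub>0 \<in> T" "tail \<theta>\<^sub>0 k = \<alpha> / 2"
  shows "k - 1 \<in> X \<and> k \<in> X"
proof (rule ccontr)
  assume "\<not> ?thesis"
  then show False
    by (rule tail_constant_off_support) (use assms alpha_pos alpha_less_1 in simp_all)
qed

lemma tail_compare_level:
  assumes "\<theta>\<^sub>0 \<in> T" "tail \<theta>\<^sub>0 k = \<alpha> / 2" "\<theta> \<in> T"
  shows "\<alpha> / 2 < tail \<theta> k \<longleftrightarrow> \<theta>\<^sub>0 < \<theta>" and "tail \<theta> k = \<alpha> / 2 \<longleftrightarrow> \<theta> = \<theta>\<^sub>0"
  using tail_strict_mono[OF assms(1,3)] tail_strict_mono[OF assms(3,1)]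
    tail_eq_level_imp_consecutive[OF assms(1,2)] assms(2)
  by (cases \<theta> \<theta>\<^sub>0 rule: linorder_cases; force)+

lemma fiducial_lower_eq_solution:
  assumes "\<theta>\<^sub>0 \<in> T" "tail \<theta>\<^sub>0 k = \<alpha> / 2"
  shows "fiducial_lower Q T \<alpha> k = ereal \<theta>\<^sub>0"
proof -
  have "(THE \<theta>. \<theta> \<in> T \<and> tail \<theta> k = \<alpha> / 2) = \<theta>\<^sub>0"
    using assms tail_compare_level(2)[OF assms] by (intro the_equality) auto
  then show ?thesis using assms unfolding fiducial_lower_def by auto
qed

lemma fiducial_lower_eq_Inf: "fiducial_lower Q T \<alpha> k = Inf (ereal ` exceed_set k)"
proof (cases "\<exists>\<theta>\<in>T. tail \<theta> k = \<alpha> / 2")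
  case True
  then obtain \<theta>\<^sub>0 where "\<theta>\<^sub>0 \<in> T" "tail \<theta>\<^sub>0 k = \<alpha> / 2" by blast
  moreover from this have "exceed_set k = {\<theta>\<in>T. \<theta>\<^sub>0 < \<theta>}"
    using tail_compare_level(1) unfolding exceed_set_def by blast
  ultimately show ?thesis
    using fiducial_lower_eq_solution Inf_ereal_greaterThan_open[OF open_T] by simp
qed (simp add: fiducial_lower_def exceed_set_def)

lemma mono_fiducial_lower: "mono (fiducial_lower Q T \<alpha>)"
proof (rule monoI)
  fix k m :: int assume "k \<le> m"
  then have "tail \<theta> m \<le> tail \<theta> k" for \<theta>
    by (intro measure_pmf.finite_measure_mono) auto
  then have "exceed_set m \<subseteq> exceed_set k"
    unfolding exceed_set_def by (auto intro: less_le_trans)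
  then show "fiducial_lower Q T \<alpha> k \<le> fiducial_lower Q T \<alpha> m"
    unfolding fiducial_lower_eq_Inf by (intro Inf_superset_mono) auto
qed

lemma tail_le_level_below_fiducial_lower:
  assumes "\<theta> \<in> T" "ereal \<theta> < fiducial_lower Q T \<alpha> k"
  shows "tail \<theta> k \<le> \<alpha> / 2"
proof (rule ccontr)
  assume "\<not> ?thesis"
  then have "\<theta> \<in> exceed_set k" using assms unfolding exceed_set_def by auto
  then have "fiducial_lower Q T \<alpha> k \<le> ereal \<theta>"
    unfolding fiducial_lower_eq_Inf by (auto intro: Inf_lower)
  then show False using assms by simp
qed

lemma fiducial_lower_coverage:
  assumes "\<theta> \<in> T"
  shows "1 - \<alpha> / 2 \<le> measure_pmf.prob (Q \<theta>) {x. fiducial_lower Q T \<alpha> x \<le> ereal \<theta>}"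
proof -
  define B where "B = {k. ereal \<theta> < fiducial_lower Q T \<alpha> k}"
  have up: "m \<in> B" if "k \<in> B" "k \<le> m" for k m
    using that monoD[OF mono_fiducial_lower, of k m] unfolding B_def by (auto intro: less_le_trans)
  have small: "tail \<theta> k \<le> \<alpha> / 2" if "k \<in> B" for k
    using tail_le_level_below_fiducial_lower assms that unfolding B_def by blast
  have "measure_pmf.prob (Q \<theta>) B \<le> \<alpha> / 2"
  proof (cases "B = {}")
    case False
    then obtain k where "k \<in> B" by blast
    have "\<alpha> / 2 < 1" using alpha_less_1 by simp
    then obtain m where "\<alpha> / 2 < tail \<theta> m" by (rule measure_pmf_atLeast_gt)
    then have "m \<notin> B" using small by force
    obtain k\<^sub>0 where "B = {k\<^sub>0..}"
      using up \<open>k \<in> B\<close> \<open>m \<notin> B\<close> by (rule int_up_closed_eq_atLeast)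
    then show ?thesis using small[of k\<^sub>0] by simp
  qed (simp add: alpha_pos less_imp_le)
  moreover have "{x. fiducial_lower Q T \<alpha> x \<le> ereal \<theta>} = - B"
    unfolding B_def by (auto simp: not_less)
  ultimately show ?thesis by (simp add: measure_pmf_prob_Compl)
qed

lemma lower_confidence_bound_fiducial_lower:
  "lower_confidence_bound Q T X \<alpha> (fiducial_lower Q T \<alpha>)"
  unfolding lower_confidence_bound_def
  using monoD[OF mono_fiducial_lower] fiducial_lower_coverage by simp

lemma le_fiducial_lower:
  assumes L: "lower_confidence_bound Q T X \<alpha> L" and "x\<^sub>0 \<in> X"
  shows "L x\<^sub>0 \<le> fiducial_lower Q T \<alpha> x\<^sub>0"
proof (rule ccontr)
  assume "\<not> ?thesis"
  then obtain s where s: "s \<in> exceed_set x\<^sub>0" "ereal s < L x\<^sub>0"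
    by (auto simp: fiducial_lower_eq_Inf Inf_less_iff not_le)
  then obtain r where "s < r" "ereal r < L x\<^sub>0"
    using ereal_dense2 by force
  moreover have "s \<in> T" using s(1) unfolding exceed_set_def by simp
  ultimately obtain \<theta> where \<theta>: "\<theta> \<in> T" "s < \<theta>" "\<theta> < r"
    using open_real_obtain_between open_T by metis
  have "\<alpha> / 2 < tail \<theta> x\<^sub>0"
    using s(1) tail_mono[OF \<open>s \<in> T\<close> \<theta>(1) less_imp_le[OF \<theta>(2)], of x\<^sub>0]
    unfolding exceed_set_def by simp
  have "mono_on X L"
    using L consecutive unfolding lower_confidence_bound_def by (blast intro: mono_on_consecutive_int)
  have "ereal \<theta> < L x\<^sub>0"
    using \<open>\<theta> < r\<close> by (intro less_trans[OF _ \<open>ereal r < L x\<^sub>0\<close>]) simp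
  have "x < x\<^sub>0" if "x \<in> X" "L x \<le> ereal \<theta>" for x
  proof (rule ccontr)
    assume "\<not> x < x\<^sub>0"
    then have "L x\<^sub>0 \<le> L x" using mono_onD[OF \<open>mono_on X L\<close> \<open>x\<^sub>0 \<in> X\<close> \<open>x \<in> X\<close>] by simp
    then show False using that(2) \<open>ereal \<theta> < L x\<^sub>0\<close> by simp
  qed
  then have "{x. L x \<le> ereal \<theta>} \<inter> set_pmf (Q \<theta>) \<subseteq> - {x\<^sub>0..}"
    using support[OF \<theta>(1)] by auto
  then have "measure_pmf.prob (Q \<theta>) {x. L x \<le> ereal \<theta>} \<le> measure_pmf.prob (Q \<theta>) (- {x\<^sub>0..})"
    by (subst measure_Int_set_pmf[symmetric]) (intro measure_pmf.finite_measure_mono, auto)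
  then show False
    using L \<theta>(1) \<open>\<alpha> / 2 < tail \<theta> x\<^sub>0\<close>
    unfolding lower_confidence_bound_def measure_pmf_prob_Compl by fastforce
qed

end

definition reflect_family :: "(real \<Rightarrow> int pmf) \<Rightarrow> real \<Rightarrow> int pmf" where
  "reflect_family P \<theta> = map_pmf uminus (P (- \<theta>))"

definition reflect_bound :: "(int \<Rightarrow> ereal) \<Rightarrow> int \<Rightarrow> ereal" where
  "reflect_bound U y = - U (- y)"

lemma prob_reflect_family:
  "measure_pmf.prob (reflect_family P \<theta>) A = measure_pmf.prob (P (- \<theta>)) (uminus ` A)"
proof -
  have "uminus -` A = uminus ` A" by (auto simp: uminus_image_iff)
  then show ?thesis by (simp add: reflect_family_def measure_map_pmf)
qed

lemma in_M_iff_lower_confidence_bounds: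
  "in_M P \<Theta> \<X> \<alpha> L U \<longleftrightarrow> lower_confidence_bound P \<Theta> \<X> \<alpha> L \<and>
     lower_confidence_bound (reflect_family P) (uminus ` \<Theta>) (uminus ` \<X>) \<alpha> (reflect_bound U)"
proof -
  have mono: "(\<forall>y. y \<in> uminus ` \<X> \<longrightarrow> y + 1 \<in> uminus ` \<X> \<longrightarrow> reflect_bound U y \<le> reflect_bound U (y + 1))
      \<longleftrightarrow> (\<forall>x. x \<in> \<X> \<longrightarrow> x + 1 \<in> \<X> \<longrightarrow> U x \<le> U (x + 1))"
    (is "(\<forall>y. ?R y) \<longleftrightarrow> (\<forall>x. ?U x)")
  proof -
    have R_eq_U: "?R y \<longleftrightarrow> ?U (- (y + 1))" for y
      by (auto simp: uminus_image_iff reflect_bound_def)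
    show ?thesis
    proof
      assume "\<forall>y. ?R y"
      show "\<forall>x. ?U x"
      proof
        fix x
        have "?U (- (- (x + 1) + 1))" using R_eq_U \<open>\<forall>y. ?R y\<close> by blast
        then show "?U x" by simp
      qed
    qed (use R_eq_U in blast)
  qed
  have "uminus ` {y. reflect_bound U y \<le> ereal (- \<theta>)} = {x. ereal \<theta> \<le> U x}" for \<theta>
    using ereal_uminus_le_reorder[of "U x" "ereal (- \<theta>)" for x]
    by (auto simp: uminus_image_iff reflect_bound_def)
  then have cover: "measure_pmf.prob (reflect_family P (- \<theta>)) {y. reflect_bound U y \<le> ereal (- \<theta>)}
      = measure_pmf.prob (P \<theta>) {x. ereal \<theta> \<le> U x}" for \<theta>
    by (simp only: prob_reflect_family minus_minus)
  show ?thesis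
    unfolding in_M_def lower_confidence_bound_def Ball_image_comp o_def cover mono by blast
qed

locale decreasing_cdf_model =
  fixes P :: "real \<Rightarrow> int pmf" and \<Theta> :: "real set" and \<X> :: "int set" and \<alpha> :: real
  assumes open_Theta: "open \<Theta>"
    and consecutive: "\<And>a b. a \<in> \<X> \<Longrightarrow> b \<in> \<X> \<Longrightarrow> {a..b} \<subseteq> \<X>"
    and support: "\<And>\<theta>. \<theta> \<in> \<Theta> \<Longrightarrow> set_pmf (P \<theta>) = \<X>"
    and cdf_strict_antimono: "\<And>x \<theta>\<^sub>1 \<theta>\<^sub>2. x \<in> \<X> \<Longrightarrow> (\<exists>y\<in>\<X>. x < y) \<Longrightarrow> \<theta>\<^sub>1 \<in> \<Theta> \<Longrightarrow> \<theta>\<^sub>2 \<in> \<Theta> \<Longrightarrow>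
        \<theta>\<^sub>1 < \<theta>\<^sub>2 \<Longrightarrow> measure_pmf.prob (P \<theta>\<^sub>2) {..x} < measure_pmf.prob (P \<theta>\<^sub>1) {..x}"
    and alpha_pos: "0 < \<alpha>" and alpha_less_1: "\<alpha> < 1"
begin

sublocale lower: increasing_tail_model P \<Theta> \<X> \<alpha>
proof
  fix \<theta>\<^sub>1 \<theta>\<^sub>2 k
  assume "\<theta>\<^sub>1 \<in> \<Theta>" "\<theta>\<^sub>2 \<in> \<Theta>" "\<theta>\<^sub>1 < \<theta>\<^sub>2" "k - 1 \<in> \<X>" "k \<in> \<X>"
  then have "measure_pmf.prob (P \<theta>\<^sub>2) {..k - 1} < measure_pmf.prob (P \<theta>\<^sub>1) {..k - 1}"
    using cdf_strict_antimono[of "k - 1" \<theta>\<^sub>1 \<theta>\<^sub>2] by force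
  moreover have "{k..} = - {..k - 1}" by auto
  ultimately show "measure_pmf.prob (P \<theta>\<^sub>1) {k..} < measure_pmf.prob (P \<theta>\<^sub>2) {k..}"
    by (simp only: measure_pmf_prob_Compl)
qed (use open_Theta support consecutive alpha_pos alpha_less_1 in auto)

sublocale upper: increasing_tail_model "reflect_family P" "uminus ` \<Theta>" "uminus ` \<X>" \<alpha>
proof
  show "open (uminus ` \<Theta>)" using open_Theta by (rule open_negations)
next
  fix \<theta> assume "\<theta> \<in> uminus ` \<Theta>"
  then show "set_pmf (reflect_family P \<theta>) = uminus ` \<X>"
    using support by (simp add: uminus_image_iff reflect_family_def)
next
  fix a b assume "a \<in> uminus ` \<X>" "b \<in> uminus ` \<X>"
  then have "{- b..- a} \<subseteq> \<X>" using consecutive by (simp add: uminus_image_iff)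
  then show "{a..b} \<subseteq> uminus ` \<X>" by (auto simp: uminus_image_iff subset_iff)
next
  fix \<theta>\<^sub>1 \<theta>\<^sub>2 k
  assume "\<theta>\<^sub>1 \<in> uminus ` \<Theta>" "\<theta>\<^sub>2 \<in> uminus ` \<Theta>" "\<theta>\<^sub>1 < \<theta>\<^sub>2" "k - 1 \<in> uminus ` \<X>" "k \<in> uminus ` \<X>"
  then have "measure_pmf.prob (P (- \<theta>\<^sub>1)) {..- k} < measure_pmf.prob (P (- \<theta>\<^sub>2)) {..- k}"
    using cdf_strict_antimono[of "- k" "- \<theta>\<^sub>2" "- \<theta>\<^sub>1"] by (force simp: uminus_image_iff)
  then show "measure_pmf.prob (reflect_family P \<theta>\<^sub>1) {k..} < measure_pmf.prob (reflect_family P \<theta>\<^sub>2) {k..}"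
    by (simp add: prob_reflect_family)
qed (use alpha_pos alpha_less_1 in auto)

lemma reflect_fiducial_upper:
  "reflect_bound (fiducial_upper P \<Theta> \<alpha>) = fiducial_lower (reflect_family P) (uminus ` \<Theta>) \<alpha>"
proof
  fix y :: int
  define x where "x = - y"
  let ?F = "\<lambda>\<theta>. measure_pmf.prob (P \<theta>) {..x}"
  have tail_eq: "upper.tail \<theta> y = ?F (- \<theta>)" for \<theta>
    by (simp add: prob_reflect_family x_def)
  show "reflect_bound (fiducial_upper P \<Theta> \<alpha>) y = fiducial_lower (reflect_family P) (uminus ` \<Theta>) \<alpha> y"
  proof (cases "\<exists>\<theta>\<in>\<Theta>. ?F \<theta> = \<alpha> / 2")
    case True
    then obtain \<theta>\<^sub>0 where \<theta>\<^sub>0: "\<theta>\<^sub>0 \<in> \<Theta>" "?F \<theta>\<^sub>0 = \<alpha> / 2" by blast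
    then have sol: "- \<theta>\<^sub>0 \<in> uminus ` \<Theta>" "upper.tail (- \<theta>\<^sub>0) y = \<alpha> / 2"
      by (simp_all add: tail_eq)
    have "(THE \<theta>. \<theta> \<in> \<Theta> \<and> ?F \<theta> = \<alpha> / 2) = \<theta>\<^sub>0"
    proof (rule the_equality)
      fix \<theta> assume "\<theta> \<in> \<Theta> \<and> ?F \<theta> = \<alpha> / 2"
      then have "- \<theta> = - \<theta>\<^sub>0"
        using upper.tail_compare_level(2)[OF sol, of "- \<theta>"] by (simp add: tail_eq)
      then show "\<theta> = \<theta>\<^sub>0" by simp
    qed (use \<theta>\<^sub>0 in simp)
    then show ?thesis
      using True upper.fiducial_lower_eq_solution[OF sol]
      by (simp add: fiducial_upper_def reflect_bound_def x_def)
  next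
    case False
    then have "\<not> (\<exists>\<theta>\<in>uminus ` \<Theta>. upper.tail \<theta> y = \<alpha> / 2)"
      by (simp add: tail_eq)
    moreover have "{\<theta> \<in> uminus ` \<Theta>. \<alpha> / 2 < upper.tail \<theta> y} = uminus ` {\<theta>\<in>\<Theta>. \<alpha> / 2 < ?F \<theta>}"
      by (auto simp: tail_eq uminus_image_iff)
    ultimately have "fiducial_lower (reflect_family P) (uminus ` \<Theta>) \<alpha> y
        = Inf (uminus ` ereal ` {\<theta>\<in>\<Theta>. \<alpha> / 2 < ?F \<theta>})"
      by (simp add: fiducial_lower_def image_image)
    also have "\<dots> = - fiducial_upper P \<Theta> \<alpha> x"
      using False by (simp add: ereal_Inf_uminus_image_eq fiducial_upper_def)
    finally show ?thesis by (simp add: reflect_bound_def x_def)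
  qed
qed

lemma fiducial_interval_in_M: "in_M P \<Theta> \<X> \<alpha> (fiducial_lower P \<Theta> \<alpha>) (fiducial_upper P \<Theta> \<alpha>)"
  unfolding in_M_iff_lower_confidence_bounds reflect_fiducial_upper
  using lower.lower_confidence_bound_fiducial_lower upper.lower_confidence_bound_fiducial_lower ..

lemma fiducial_interval_subset:
  assumes "in_M P \<Theta> \<X> \<alpha> L U" "x \<in> \<X>"
  shows "open_interval (fiducial_lower P \<Theta> \<alpha> x) (fiducial_upper P \<Theta> \<alpha> x) \<subseteq> open_interval (L x) (U x)"
proof -
  from assms(1) have L: "lower_confidence_bound P \<Theta> \<X> \<alpha> L"
    and U: "lower_confidence_bound (reflect_family P) (uminus ` \<Theta>) (uminus ` \<X>) \<alpha> (reflect_bound U)"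
    unfolding in_M_iff_lower_confidence_bounds by blast+
  have "L x \<le> fiducial_lower P \<Theta> \<alpha> x" using L assms(2) by (rule lower.le_fiducial_lower)
  moreover have "reflect_bound U (- x) \<le> reflect_bound (fiducial_upper P \<Theta> \<alpha>) (- x)"
    unfolding reflect_fiducial_upper using U assms(2)
    by (intro upper.le_fiducial_lower) (simp_all add: uminus_image_iff)
  then have "fiducial_upper P \<Theta> \<alpha> x \<le> U x" by (simp add: reflect_bound_def)
  ultimately show ?thesis
    unfolding open_interval_def by (auto dest: le_less_trans less_le_trans)
qed

end

theorem proposition9:
  fixes P :: "real \<Rightarrow> int pmf" and \<Theta> :: "real set" and \<X> :: "int set" and \<alpha> :: real
  assumes Theta_open: "open \<Theta>" and Theta_conn: "connected \<Theta>" and Theta_ne: "\<Theta> \<noteq> {}"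
    and X_consec: "\<And>a b. a \<in> \<X> \<Longrightarrow> b \<in> \<X> \<Longrightarrow> {a..b} \<subseteq> \<X>"
    and support: "\<And>\<theta>. \<theta> \<in> \<Theta> \<Longrightarrow> set_pmf (P \<theta>) = \<X>"
    and A1: "\<And>\<theta> x. \<theta> \<in> \<Theta> \<Longrightarrow> x \<in> \<X> \<Longrightarrow> pmf (P \<theta>) x > 0"
    and A2: "\<And>x \<theta>1 \<theta>2. x \<in> \<X> \<Longrightarrow> (\<exists>y\<in>\<X>. x < y) \<Longrightarrow> \<theta>1 \<in> \<Theta> \<Longrightarrow> \<theta>2 \<in> \<Theta> \<Longrightarrow>
               \<theta>1 < \<theta>2 \<Longrightarrow> measure_pmf.prob (P \<theta>2) {..x} < measure_pmf.prob (P \<theta>1) {..x}"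
    and A3: "\<And>x. x \<in> \<X> \<Longrightarrow> (\<lambda>\<theta>. pmf (P \<theta>) x) differentiable_on \<Theta>"
    and alpha: "0 < \<alpha>" "\<alpha> < 1"
  shows "in_M P \<Theta> \<X> \<alpha> (fiducial_lower P \<Theta> \<alpha>) (fiducial_upper P \<Theta> \<alpha>) \<and>
         (\<forall>L U. in_M P \<Theta> \<X> \<alpha> L U \<longrightarrow>
            (\<forall>x\<in>\<X>. open_interval (fiducial_lower P \<Theta> \<alpha> x) (fiducial_upper P \<Theta> \<alpha> x)
                     - open_interval (L x) (U x) = {}))"
proof -
  interpret decreasing_cdf_model P \<Theta> \<X> \<alpha>
    by unfold_locales (fact Theta_open X_consec support A2 alpha)+
  show ?thesis
    using fiducial_interval_in_M fiducial_interval_subset by blast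
qed

end
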